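(* Let $A\subseteq\mathbb{N}$ and let $f:\mathbb{N}^3\to\mathbb{N}$ be defined by $f(m,n_1,n_2)=n_1$ if $m\in A$ and $f(m,n_1,n_2)=n_2$ otherwise. Then either $f$ is not strictly definable, or $f\in\mathcal{G}$.
   Context: We work in the simply typed $\lambda$-calculus (type assignment to untyped $\lambda$-terms) with a single base type $o$, with $\beta\eta$-conversion as equality. For a type $\tau$, $\omega_\tau=(\tau\to\tau)\to\tau\to\tau$. The Church numeral of $n$ is $\rho(n)=\lambda f x.f^{n}x$. A function $f:\mathbb{N}^k\to\mathbb{N}$ is strictly definable if there exist a type $\tau$ and a term $E$ with $\vdash E:\omega_\tau\to\cdots\to\omega_\tau\to\omega_\tau$ ($k$ arguments) such that $E\,\rho(n_1)\cdots\rho(n_k)=_{\beta\eta}\rho(f(n_1,\dots,n_k))$ for all $n_1,\dots,n_k$. Extended polynomials: the smallest class of functions over $\mathbb{N}$ containing the constants $0$ and $1$, projections, addition, multiplication and $\mathrm{ifzero}(n,m,p)=(\text{if } n=0 \text{ then } m \text{ else } p)$, closed under composition. $\mathcal{G}$ is the smallest class of functions over $\mathbb{N}$ that is closed under composition and contains: all extended polynomials; for every $l\geq 2$ the function $f_1^{l}(m,n_1,\dots,n_l)=n_i$ where $i=(m\bmod l)+1$; and for every $l\geq 1$ the function $f_2^{l}(m,n_1,n_2)=(\text{if } m\leq l \text{ then } n_1 \text{ else } n_2)$. *)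

theory Defs
  imports Main
begin

datatype dB = Var nat | App dB dB | Abs dB

primrec lift :: "dB \<Rightarrow> nat \<Rightarrow> dB" where
  "lift (Var i) k = (if i < k then Var i else Var (Suc i))"
| "lift (App s t) k = App (lift s k) (lift t k)"
| "lift (Abs s) k = Abs (lift s (Suc k))"

primrec subst :: "dB \<Rightarrow> dB \<Rightarrow> nat \<Rightarrow> dB" where
  "subst (Var i) s k = (if k < i then Var (i - 1) else if i = k then s else Var i)"
| "subst (App t u) s k = App (subst t s k) (subst u s k)"
| "subst (Abs t) s k = Abs (subst t (lift s 0) (Suc k))"

inductive red1 :: "dB \<Rightarrow> dB \<Rightarrow> bool" where
  beta: "red1 (App (Abs s) t) (subst s t 0)"
| eta: "red1 (Abs (App (lift s 0) (Var 0))) s"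
| appL: "red1 s t \<Longrightarrow> red1 (App s u) (App t u)"
| appR: "red1 s t \<Longrightarrow> red1 (App u s) (App u t)"
| abs: "red1 s t \<Longrightarrow> red1 (Abs s) (Abs t)"

definition beta_eta_conv :: "dB \<Rightarrow> dB \<Rightarrow> bool" where
  "beta_eta_conv = (sup red1 red1\<inverse>\<inverse>)\<^sup>*\<^sup>*"

datatype stype = O | Fun stype stype

inductive typing :: "stype list \<Rightarrow> dB \<Rightarrow> stype \<Rightarrow> bool" where
  var: "i < length \<Gamma> \<Longrightarrow> \<Gamma> ! i = T \<Longrightarrow> typing \<Gamma> (Var i) T"
| app: "typing \<Gamma> s (Fun T U) \<Longrightarrow> typing \<Gamma> t T \<Longrightarrow> typing \<Gamma> (App s t) U"
| abs: "typing (T # \<Gamma>) t U \<Longrightarrow> typing \<Gamma> (Abs t) (Fun T U)"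

definition omega :: "stype \<Rightarrow> stype" where
  "omega \<tau> = Fun (Fun \<tau> \<tau>) (Fun \<tau> \<tau>)"

text \<open>Church numeral: \<lambda>f x. f^n x  (f = Var 1, x = Var 0 under two binders).\<close>
definition church :: "nat \<Rightarrow> dB" where
  "church n = Abs (Abs (((App (Var 1)) ^^ n) (Var 0)))"

definition arrows :: "stype list \<Rightarrow> stype \<Rightarrow> stype" where
  "arrows Ts U = foldr Fun Ts U"

text \<open>A k-ary function is represented as a function on lists, meaningful on lists of length k.\<close>
definition strictly_definable :: "nat \<Rightarrow> (nat list \<Rightarrow> nat) \<Rightarrow> bool" where
  "strictly_definable k f \<longleftrightarrow>
     (\<exists>\<tau> E. typing [] E (arrows (replicate k (omega \<tau>)) (omega \<tau>)) \<and>
        (\<forall>ns. length ns = k \<longrightarrow>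
           beta_eta_conv (foldl App E (map church ns)) (church (f ns))))"

inductive ext_poly :: "nat \<Rightarrow> (nat list \<Rightarrow> nat) \<Rightarrow> bool" where
  zero: "ext_poly 0 (\<lambda>_. 0)"
| one: "ext_poly 0 (\<lambda>_. 1)"
| proj: "i < k \<Longrightarrow> ext_poly k (\<lambda>xs. xs ! i)"
| add: "ext_poly 2 (\<lambda>xs. xs ! 0 + xs ! 1)"
| mult: "ext_poly 2 (\<lambda>xs. xs ! 0 * xs ! 1)"
| ifzero: "ext_poly 3 (\<lambda>xs. if xs ! 0 = 0 then xs ! 1 else xs ! 2)"
| comp: "ext_poly m f \<Longrightarrow> length gs = m \<Longrightarrow> \<forall>g\<in>set gs. ext_poly k g \<Longrightarrow>
         ext_poly k (\<lambda>xs. f (map (\<lambda>g. g xs) gs))"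

inductive classG :: "nat \<Rightarrow> (nat list \<Rightarrow> nat) \<Rightarrow> bool" where
  ext: "ext_poly k f \<Longrightarrow> classG k f"
| f1: "l \<ge> 2 \<Longrightarrow> classG (Suc l) (\<lambda>xs. xs ! Suc (xs ! 0 mod l))"
| f2: "l \<ge> 1 \<Longrightarrow> classG 3 (\<lambda>xs. if xs ! 0 \<le> l then xs ! 1 else xs ! 2)"
| comp: "classG m f \<Longrightarrow> length gs = m \<Longrightarrow> \<forall>g\<in>set gs. classG k g \<Longrightarrow>
         classG k (\<lambda>xs. f (map (\<lambda>g. g xs) gs))"

definition in_G :: "nat \<Rightarrow> (nat list \<Rightarrow> nat) \<Rightarrow> bool" where
  "in_G k f \<longleftrightarrow> (\<exists>g. classG k g \<and> (\<forall>xs. length xs = k \<longrightarrow> g xs = f xs))"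

end

theory Submission
  imports Defs "HOL-Library.Confluence"
begin

text \<open>
  Suppose f is strictly definable by a term E at type omega \<tau>. Evaluate typed terms in the full
  type hierarchy over a two-element base set, where every type denotes a finite set. Reduction of
  typed terms preserves values; a conversion between E applied to numerals and a numeral may pass
  through untypable terms, so it is first replaced by a common reduct (Church-Rosser for
  beta-eta). Hence E induces a function F on values with F (v m) (v n1) (v n2) = v (f m n1 n2),
  where v n is the value of the numeral n, and as v 0 \<noteq> v 1 we get m \<in> A iff
  F (v m) (v 0) (v 1) = v 0. The values v n lie in a finite set and v (n + 1) is determined by
  v n, so v and therefore A are eventually periodic. Selection along an eventually periodic set
  is in G: f1 decides the periodic part by a residue of the argument, and f2 and ifzero patch
  the finitely many arguments below the threshold.
\<close>

section \<open>Abstract rewriting\<close>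

lemma confluentp_cong: "r\<^sup>*\<^sup>* = s\<^sup>*\<^sup>* \<Longrightarrow> confluentp r = confluentp s"
  by (simp add: confluentp_def rtranclp_conversep)

lemma rtranclp_commute:
  assumes "r\<^sup>*\<^sup>* x y" and "s\<^sup>*\<^sup>* x z"
    and local_commute: "\<And>x y z. r x y \<Longrightarrow> s x z \<Longrightarrow> \<exists>u. s\<^sup>*\<^sup>* y u \<and> r\<^sup>=\<^sup>= z u"
  shows "\<exists>u. s\<^sup>*\<^sup>* y u \<and> r\<^sup>*\<^sup>* z u"
proof -
  have strip: "\<exists>u. s\<^sup>*\<^sup>* y u \<and> r\<^sup>=\<^sup>= z u" if "r x y" "s\<^sup>*\<^sup>* x z" for x y z
    using that(2,1)
  proof (induction arbitrary: y rule: rtranclp_induct)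
    case base
    then show ?case by blast
  next
    case (step z' z)
    then obtain u where yu: "s\<^sup>*\<^sup>* y u" and z'u: "r\<^sup>=\<^sup>= z' u" by blast
    from z'u show ?case
    proof
      assume "r z' u"
      with step.hyps(2) obtain v where "s\<^sup>*\<^sup>* u v" "r\<^sup>=\<^sup>= z v"
        using local_commute by blast
      with yu show ?thesis by (meson rtranclp_trans)
    next
      assume "z' = u"
      with yu step.hyps(2) have "s\<^sup>*\<^sup>* y z" by simp
      then show ?thesis by blast
    qed
  qed
  from assms(1,2) show ?thesis
  proof (induction arbitrary: z rule: rtranclp_induct)
    case base
    then show ?case by blast
  next
    case (step y' y)
    then obtain u where y'u: "s\<^sup>*\<^sup>* y' u" and zu: "r\<^sup>*\<^sup>* z u" by blast
    obtain v where yv: "s\<^sup>*\<^sup>* y v" and "r\<^sup>=\<^sup>= u v"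
      using strip[OF step.hyps(2) y'u] by blast
    with zu have "r\<^sup>*\<^sup>* z v" by (auto intro: rtranclp.rtrancl_into_rtrancl)
    with yv show ?case by blast
  qed
qed

lemma confluentp_sup:
  assumes "confluentp r" and "confluentp s"
    and commute: "\<And>x y z. r\<^sup>*\<^sup>* x y \<Longrightarrow> s\<^sup>*\<^sup>* x z \<Longrightarrow> \<exists>u. s\<^sup>*\<^sup>* y u \<and> r\<^sup>*\<^sup>* z u"
  shows "confluentp (sup r s)"
proof -
  let ?R = "sup r\<^sup>*\<^sup>* s\<^sup>*\<^sup>*"
  have diamond: "\<exists>u. ?R y u \<and> ?R z u" if "?R x y" "?R x z" for x y z
    using that
  proof (elim sup2E)
    assume "r\<^sup>*\<^sup>* x y" "r\<^sup>*\<^sup>* x z"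
    then show ?thesis using confluentpD[OF assms(1)] by blast
  next
    assume "r\<^sup>*\<^sup>* x y" "s\<^sup>*\<^sup>* x z"
    then show ?thesis using commute by blast
  next
    assume "s\<^sup>*\<^sup>* x y" "r\<^sup>*\<^sup>* x z"
    then show ?thesis using commute by blast
  next
    assume "s\<^sup>*\<^sup>* x y" "s\<^sup>*\<^sup>* x z"
    then show ?thesis using confluentpD[OF assms(2)] by blast
  qed
  then have "confluentp ?R"
  proof (intro strong_confluentp_imp_confluentp strong_confluentpI)
    fix x y z assume "?R x y" "?R x z"
    then obtain u where "?R y u" "?R z u" using diamond by blast
    then show "\<exists>u. ?R\<^sup>*\<^sup>* y u \<and> ?R\<^sup>=\<^sup>= z u" by blast
  qed
  moreover have "?R\<^sup>*\<^sup>* = (sup r s)\<^sup>*\<^sup>*"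
  proof (rule rtranclp_subset)
    show "sup r s \<le> ?R"
      by (intro sup_mono) auto
    show "?R \<le> (sup r s)\<^sup>*\<^sup>*"
      by (intro le_supI rtranclp_mono) simp_all
  qed
  ultimately show ?thesis
    using confluentp_cong by metis
qed

section \<open>Eventually periodic sequences\<close>

lemma eventually_periodic_orbit:
  fixes s :: "nat \<Rightarrow> 'a"
  assumes orbit: "\<And>m. s (Suc m) = S (s m)" and fin: "finite (range s)"
  shows "\<exists>i p. 0 < p \<and> (\<forall>m\<ge>i. s (m + p) = s m)"
proof -
  have "\<not> inj s"
  proof
    assume "inj s"
    with fin have "finite (UNIV :: nat set)"
      by (rule finite_imageD)
    then show False
      by simp
  qed
  then obtain x y where "x \<noteq> y" "s x = s y"
    unfolding inj_on_def by blast
  then have "\<exists>i j. i < j \<and> s i = s j"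
    by (metis linorder_neqE_nat)
  then obtain i j where "i < j" and eq: "s i = s j"
    by blast
  have shift: "s (i + d) = s (j + d)" for d
    by (induct d) (simp_all add: eq orbit)
  have "s (m + (j - i)) = s m" if "i \<le> m" for m
  proof -
    have "m + (j - i) = j + (m - i)" and "m = i + (m - i)"
      using that \<open>i < j\<close> by simp_all
    then show ?thesis
      using shift[of "m - i"] by metis
  qed
  with \<open>i < j\<close> show ?thesis
    by (intro exI[of _ i] exI[of _ "j - i"]) simp
qed

lemma eventually_periodic_mod_eq:
  fixes s :: "nat \<Rightarrow> 'a" and i p m m' :: nat
  assumes per: "\<And>m. i \<le> m \<Longrightarrow> s (m + p) = s m"
    and "i \<le> m" and "i \<le> m'" and "m mod p = m' mod p"
  shows "s m = s m'"
proof -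
  have shift: "s (m + p * q) = s m" if "i \<le> m" for m q
  proof (induct q)
    case (Suc q)
    have "s (m + p * Suc q) = s ((m + p * q) + p)"
      by (simp add: ac_simps)
    also have "\<dots> = s m"
      using per[of "m + p * q"] that Suc by simp
    finally show ?case .
  qed simp
  show ?thesis
  proof (cases "m \<le> m'")
    case True
    with assms(4) obtain q where "m' = m + p * q"
      by (elim mod_eq_nat2E)
    with shift assms(2) show ?thesis by simp
  next
    case False
    then have "m' \<le> m" by simp
    with assms(4) obtain q where "m = m' + p * q"
      by (elim mod_eq_nat1E)
    with shift assms(3) show ?thesis by simp
  qed
qed

section \<open>Beta and eta reduction of de Bruijn terms\<close>

lemma lift_lift:
  "i \<le> k \<Longrightarrow> lift (lift t i) (Suc k) = lift (lift t k) i"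
  by (induct t arbitrary: i k) auto

lemma lift_subst [simp]:
  "j \<le> i \<Longrightarrow> lift (subst t s j) i = subst (lift t (Suc i)) (lift s i) j"
  by (induct t arbitrary: i j s) (auto simp: lift_lift)

lemma lift_subst_lt:
  "i \<le> j \<Longrightarrow> lift (subst t s j) i = subst (lift t i) (lift s i) (Suc j)"
  by (induct t arbitrary: i j s) (auto simp: lift_lift)

lemma subst_lift [simp]: "subst (lift t k) s k = t"
  by (induct t arbitrary: k s) auto

lemma subst_subst:
  "i \<le> j \<Longrightarrow>
   subst (subst t (lift v i) (Suc j)) (subst u v j) i = subst (subst t u i) v j"
  by (induct t arbitrary: i j u v) (auto simp: lift_lift[symmetric] lift_subst_lt)

lemma lift_eq_App_iff:
  "lift s k = App a b \<longleftrightarrow> (\<exists>a' b'. s = App a' b' \<and> lift a' k = a \<and> lift b' k = b)"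
  by (cases s) auto

lemma lift_eq_Abs_iff: "lift s k = Abs a \<longleftrightarrow> (\<exists>a'. s = Abs a' \<and> lift a' (Suc k) = a)"
  by (cases s) auto

lemma lift_inject [simp]: "lift s k = lift t k \<longleftrightarrow> s = t"
proof (induct s arbitrary: t k)
  case (Var i)
  then show ?case by (cases t) auto
next
  case (App s1 s2)
  then show ?case by (cases t) auto
next
  case (Abs s)
  then show ?case by (cases t) auto
qed

lemma lift_eq_lift:
  "lift s (Suc k) = lift t j \<Longrightarrow> j \<le> k \<Longrightarrow> \<exists>u. s = lift u j \<and> t = lift u k"
proof (induct s arbitrary: t j k)
  case (Var i)
  then obtain m where t: "t = Var m" by (cases t) (auto split: if_splits)
  show ?case
  proof (cases "i \<le> k")
    case True
    with Var t show ?thesis by (intro exI[of _ "Var m"]) (auto split: if_splits)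
  next
    case False
    with Var t show ?thesis by (intro exI[of _ "Var (i - 1)"]) (auto split: if_splits)
  qed
next
  case (App s1 s2)
  then obtain t1 t2 where t: "t = App t1 t2" by (cases t) (auto split: if_splits)
  with App obtain u1 u2 where "s1 = lift u1 j" "t1 = lift u1 k" "s2 = lift u2 j" "t2 = lift u2 k"
    by (metis dB.inject(2) lift.simps(2))
  with t show ?case by (intro exI[of _ "App u1 u2"]) simp
next
  case (Abs s1)
  then obtain t1 where t: "t = Abs t1" by (cases t) (auto split: if_splits)
  with Abs obtain u where "s1 = lift u (Suc j)" "t1 = lift u (Suc k)"
    by (metis Suc_le_mono dB.inject(3) lift.simps(3))
  with t show ?case by (intro exI[of _ "Abs u"]) simp
qed

lemma subst_lift_Var: "subst (lift t (Suc k)) (Var k) k = t"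
  by (induct t arbitrary: k) auto

inductive compat :: "(dB \<Rightarrow> dB \<Rightarrow> bool) \<Rightarrow> dB \<Rightarrow> dB \<Rightarrow> bool" for r where
  rule: "r s t \<Longrightarrow> compat r s t"
| appL: "compat r s t \<Longrightarrow> compat r (App s u) (App t u)"
| appR: "compat r s t \<Longrightarrow> compat r (App u s) (App u t)"
| abs: "compat r s t \<Longrightarrow> compat r (Abs s) (Abs t)"

inductive_cases compat_VarE: "compat r (Var i) t"
inductive_cases compat_AppE [consumes 1, case_names root left right]: "compat r (App s u) t"
inductive_cases compat_AbsE [consumes 1, case_names root body]: "compat r (Abs s) t"

lemma rtranclp_compat_App:
  assumes "(compat r)\<^sup>*\<^sup>* s s'" and "(compat r)\<^sup>*\<^sup>* t t'"
  shows "(compat r)\<^sup>*\<^sup>* (App s t) (App s' t')"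
proof -
  from assms(1) have "(compat r)\<^sup>*\<^sup>* (App s t) (App s' t)"
    by induct (auto intro: rtranclp.rtrancl_into_rtrancl compat.appL)
  also from assms(2) have "(compat r)\<^sup>*\<^sup>* (App s' t) (App s' t')"
    by induct (auto intro: rtranclp.rtrancl_into_rtrancl compat.appR)
  finally show ?thesis .
qed

lemma rtranclp_compat_Abs: "(compat r)\<^sup>*\<^sup>* s t \<Longrightarrow> (compat r)\<^sup>*\<^sup>* (Abs s) (Abs t)"
  by (induct rule: rtranclp_induct) (auto intro: rtranclp.rtrancl_into_rtrancl compat.abs)

lemma compat_lift:
  assumes "\<And>s t k. r s t \<Longrightarrow> r (lift s k) (lift t k)"
  shows "compat r s t \<Longrightarrow> compat r (lift s k) (lift t k)"
  by (induct arbitrary: k rule: compat.induct) (auto intro: compat.intros assms)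

lemma compat_subst:
  assumes "\<And>s t u k. r s t \<Longrightarrow> r (subst s u k) (subst t u k)"
  shows "compat r s t \<Longrightarrow> compat r (subst s u k) (subst t u k)"
  by (induct arbitrary: u k rule: compat.induct) (auto intro: compat.intros assms)

lemma rtranclp_compat_subst_arg:
  assumes "\<And>s t k. r s t \<Longrightarrow> r (lift s k) (lift t k)" and "compat r s t"
  shows "(compat r)\<^sup>*\<^sup>* (subst u s k) (subst u t k)"
  using assms(2)
proof (induct u arbitrary: s t k)
  case (Var i)
  then show ?case by auto
next
  case (App u1 u2)
  then show ?case by (simp add: rtranclp_compat_App)
next
  case (Abs u)
  then show ?case by (simp add: rtranclp_compat_Abs compat_lift[of r, OF assms(1)])
qed

lemma compat_lift_inv:
  assumes "\<And>s t k. r (lift s k) t \<Longrightarrow> \<exists>s'. t = lift s' k \<and> r s s'"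
  shows "compat r (lift s k) t \<Longrightarrow> \<exists>s'. t = lift s' k \<and> compat r s s'"
proof (induct "lift s k" t arbitrary: s k rule: compat.induct)
  case (rule t)
  then show ?case using assms compat.rule by metis
next
  case (appL s1 t1 u)
  then obtain a b where "s = App a b" "lift a k = s1" "lift b k = u"
    by (cases s) (auto split: if_splits)
  with appL show ?case by (metis compat.appL lift.simps(2))
next
  case (appR s1 t1 u)
  then obtain a b where "s = App a b" "lift a k = u" "lift b k = s1"
    by (cases s) (auto split: if_splits)
  with appR show ?case by (metis compat.appR lift.simps(2))
next
  case (abs s1 t1)
  then obtain a where "s = Abs a" "lift a (Suc k) = s1"
    by (cases s) (auto split: if_splits)
  with abs show ?case by (metis compat.abs lift.simps(3))
qed

lemma compat_commute:
  assumes "compat r x y" and "compat s x z"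
    and r_root: "\<And>x y z. r x y \<Longrightarrow> compat s x z \<Longrightarrow>
      \<exists>u. (compat s)\<^sup>*\<^sup>* y u \<and> (compat r)\<^sup>=\<^sup>= z u"
    and s_root: "\<And>x y z. s x z \<Longrightarrow> compat r x y \<Longrightarrow>
      \<exists>u. (compat s)\<^sup>*\<^sup>* y u \<and> (compat r)\<^sup>=\<^sup>= z u"
  shows "\<exists>u. (compat s)\<^sup>*\<^sup>* y u \<and> (compat r)\<^sup>=\<^sup>= z u"
  using assms(1,2)
proof (induct arbitrary: z rule: compat.induct)
  case (rule x y)
  then show ?case by (rule r_root)
next
  case (appL x y v)
  from appL.prems show ?case
  proof (cases rule: compat_AppE)
    case root
    then show ?thesis using s_root appL.hyps(1) compat.appL by blast
  next
    case (left x')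
    then obtain u where "(compat s)\<^sup>*\<^sup>* y u" "(compat r)\<^sup>=\<^sup>= x' u"
      using appL.hyps(2) by blast
    then show ?thesis using left
      by (intro exI[of _ "App u v"]) (auto simp: rtranclp_compat_App intro: compat.appL)
  next
    case (right v')
    then show ?thesis using appL.hyps(1)
      by (intro exI[of _ "App y v'"]) (auto intro: compat.appL compat.appR)
  qed
next
  case (appR x y v)
  from appR.prems show ?case
  proof (cases rule: compat_AppE)
    case root
    then show ?thesis using s_root appR.hyps(1) compat.appR by blast
  next
    case (left v')
    then show ?thesis using appR.hyps(1)
      by (intro exI[of _ "App v' y"]) (auto intro: compat.appL compat.appR)
  next
    case (right x')
    then obtain u where "(compat s)\<^sup>*\<^sup>* y u" "(compat r)\<^sup>=\<^sup>= x' u"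
      using appR.hyps(2) by blast
    then show ?thesis using right
      by (intro exI[of _ "App v u"]) (auto simp: rtranclp_compat_App intro: compat.appR)
  qed
next
  case (abs x y)
  from abs.prems show ?case
  proof (cases rule: compat_AbsE)
    case root
    then show ?thesis using s_root abs.hyps(1) compat.abs by blast
  next
    case (body x')
    then obtain u where "(compat s)\<^sup>*\<^sup>* y u" "(compat r)\<^sup>=\<^sup>= x' u"
      using abs.hyps(2) by blast
    then show ?thesis using body
      by (intro exI[of _ "Abs u"]) (auto simp: rtranclp_compat_Abs intro: compat.abs)
  qed
qed

inductive beta_rule :: "dB \<Rightarrow> dB \<Rightarrow> bool" where
  "beta_rule (App (Abs s) t) (subst s t 0)"

inductive eta_rule :: "dB \<Rightarrow> dB \<Rightarrow> bool" where
  "eta_rule (Abs (App (lift s 0) (Var 0))) s"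

abbreviation beta :: "dB \<Rightarrow> dB \<Rightarrow> bool" where
  "beta \<equiv> compat beta_rule"

abbreviation eta :: "dB \<Rightarrow> dB \<Rightarrow> bool" where
  "eta \<equiv> compat eta_rule"

lemma beta_rule_lift_inv:
  assumes "beta_rule (lift s k) t"
  shows "\<exists>s'. t = lift s' k \<and> beta_rule s s'"
proof -
  from assms obtain a b where "lift s k = App (Abs a) b" "t = subst a b 0"
    by cases
  then obtain a' b' where "s = App (Abs a') b'" "t = subst (lift a' (Suc k)) (lift b' k) 0"
    by (auto simp: lift_eq_App_iff lift_eq_Abs_iff)
  then show ?thesis
    by (intro exI[of _ "subst a' b' 0"]) (simp add: beta_rule.intros)
qed

lemma eta_rule_lift: "eta_rule s t \<Longrightarrow> eta_rule (lift s k) (lift t k)"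
  by (elim eta_rule.cases) (simp add: lift_lift eta_rule.intros)

lemma eta_rule_subst: "eta_rule s t \<Longrightarrow> eta_rule (subst s u k) (subst t u k)"
proof (elim eta_rule.cases)
  fix a assume "s = Abs (App (lift a 0) (Var 0))" "t = a"
  moreover have "subst (lift a 0) (lift u 0) (Suc k) = lift (subst a u k) 0"
    by (simp add: lift_subst_lt)
  ultimately show ?thesis by (simp add: eta_rule.intros)
qed

lemma eta_rule_lift_inv:
  assumes "eta_rule (lift s k) t"
  shows "\<exists>s'. t = lift s' k \<and> eta_rule s s'"
proof -
  from assms have "lift s k = Abs (App (lift t 0) (Var 0))"
    by cases simp
  then obtain a b where s: "s = Abs (App a b)" and "lift a (Suc k) = lift t 0"
    and "lift b (Suc k) = Var 0"
    by (auto simp: lift_eq_App_iff lift_eq_Abs_iff)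
  moreover from this obtain u where "a = lift u 0" "t = lift u k"
    using lift_eq_lift by blast
  moreover have "b = Var 0" using \<open>lift b (Suc k) = Var 0\<close> by (cases b) (auto split: if_splits)
  ultimately show ?thesis by (auto intro: eta_rule.intros)
qed

lemmas beta_lift_inv = compat_lift_inv[of beta_rule, OF beta_rule_lift_inv]
  and eta_lift_inv = compat_lift_inv[of eta_rule, OF eta_rule_lift_inv]
  and eta_subst = compat_subst[of eta_rule, OF eta_rule_subst]
  and eta_subst_arg = rtranclp_compat_subst_arg[of eta_rule, OF eta_rule_lift]

lemma eta_rule_Var [simp]: "\<not> eta_rule (Var i) t" and beta_rule_Var [simp]: "\<not> beta_rule (Var i) t"
  by (auto elim: eta_rule.cases beta_rule.cases)

lemma compat_Var [simp]: "(\<And>t. \<not> r (Var i) t) \<Longrightarrow> \<not> compat r (Var i) t"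
  by (auto elim: compat_VarE)

lemma eta_from_eta_redex:
  assumes "eta_rule x y" and "eta x z"
  shows "z = y \<or> (\<exists>y'. eta y y' \<and> eta_rule z y')"
proof -
  from assms(1) have x: "x = Abs (App (lift y 0) (Var 0))"
    by cases simp
  from assms(2)[unfolded x] show ?thesis
  proof (cases rule: compat_AbsE)
    case root
    then show ?thesis by (auto elim: eta_rule.cases)
  next
    case (body z1)
    from body(2) show ?thesis
    proof (cases rule: compat_AppE)
      case root
      then show ?thesis by (auto elim: eta_rule.cases)
    next
      case (left w)
      then show ?thesis using body(1) eta_lift_inv by (blast intro: eta_rule.intros)
    next
      case (right w)
      then show ?thesis by simp
    qed
  qed
qed

lemma beta_from_eta_redex:
  assumes "eta_rule x z" and "beta x y"
  shows "y = z \<or> (\<exists>z'. beta z z' \<and> eta_rule y z')"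
proof -
  from assms(1) have x: "x = Abs (App (lift z 0) (Var 0))"
    by cases simp
  from assms(2)[unfolded x] show ?thesis
  proof (cases rule: compat_AbsE)
    case root
    then show ?thesis by (auto elim: beta_rule.cases)
  next
    case (body y1)
    from body(2) show ?thesis
    proof (cases rule: compat_AppE)
      case root
      then show ?thesis using body(1)
        by (auto elim!: beta_rule.cases simp: lift_eq_Abs_iff subst_lift_Var)
    next
      case (left w)
      then show ?thesis using body(1) beta_lift_inv by (blast intro: eta_rule.intros)
    next
      case (right w)
      then show ?thesis by simp
    qed
  qed
qed

lemma beta_rule_eta:
  assumes "beta_rule x y" and "eta x z"
  shows "\<exists>u. eta\<^sup>*\<^sup>* y u \<and> beta\<^sup>=\<^sup>= z u"
  using assms(1)
proof cases
  case (1 s t)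
  from assms(2)[unfolded 1] show ?thesis
  proof (cases rule: compat_AppE)
    case root
    then show ?thesis by (auto elim: eta_rule.cases)
  next
    case (left w)
    from left(2) show ?thesis
    proof (cases rule: compat_AbsE)
      case root
      then show ?thesis using left 1 by (auto elim!: eta_rule.cases)
    next
      case (body s')
      then have "eta y (subst s' t 0)"
        using 1 eta_subst by blast
      moreover have "beta z (subst s' t 0)"
        using body left by (auto intro: compat.rule beta_rule.intros)
      ultimately show ?thesis by blast
    qed
  next
    case (right t')
    then have "eta\<^sup>*\<^sup>* y (subst s t' 0)"
      using 1 eta_subst_arg by blast
    moreover have "beta z (subst s t' 0)"
      using right by (auto intro: compat.rule beta_rule.intros)
    ultimately show ?thesis by blast
  qed
qed

section \<open>Confluence of beta-eta reduction\<close>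

inductive par_beta :: "dB \<Rightarrow> dB \<Rightarrow> bool" where
  var [simp, intro!]: "par_beta (Var n) (Var n)"
| abs [simp, intro!]: "par_beta s t \<Longrightarrow> par_beta (Abs s) (Abs t)"
| app [simp, intro!]: "par_beta s s' \<Longrightarrow> par_beta t t' \<Longrightarrow> par_beta (App s t) (App s' t')"
| beta [simp, intro!]: "par_beta s s' \<Longrightarrow> par_beta t t' \<Longrightarrow> par_beta (App (Abs s) t) (subst s' t' 0)"

inductive_cases par_beta_cases [elim!]:
  "par_beta (Var n) t"
  "par_beta (Abs s) t"
  "par_beta (App s t) u"

lemma par_beta_refl [simp]: "par_beta t t"
  by (induct t) simp_all

lemma beta_le_par_beta: "beta \<le> par_beta"
proof
  fix s t assume "beta s t"
  then show "par_beta s t"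
    by induct (auto elim: beta_rule.cases)
qed

lemma par_beta_le_rtranclp_beta: "par_beta \<le> beta\<^sup>*\<^sup>*"
proof
  fix s t assume "par_beta s t"
  then show "beta\<^sup>*\<^sup>* s t"
  proof induct
    case (beta s s' t t')
    then have "beta\<^sup>*\<^sup>* (App (Abs s) t) (App (Abs s') t')"
      by (simp add: rtranclp_compat_App rtranclp_compat_Abs)
    moreover have "beta (App (Abs s') t') (subst s' t' 0)"
      by (simp add: compat.rule beta_rule.intros)
    ultimately show ?case by simp
  qed (simp_all add: rtranclp_compat_App rtranclp_compat_Abs)
qed

lemma par_beta_lift [simp]: "par_beta t t' \<Longrightarrow> par_beta (lift t k) (lift t' k)"
  by (induct arbitrary: k rule: par_beta.induct) simp_all

lemma par_beta_subst:
  "par_beta t t' \<Longrightarrow> par_beta s s' \<Longrightarrow> par_beta (subst t s k) (subst t' s' k)"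
proof (induct arbitrary: s s' k rule: par_beta.induct)
  case (beta a a' b b')
  then show ?case by (simp add: subst_subst[symmetric])
qed simp_all

fun develop :: "dB \<Rightarrow> dB" where
  "develop (Var n) = Var n"
| "develop (App (Abs s) t) = subst (develop s) (develop t) 0"
| "develop (App s t) = App (develop s) (develop t)"
| "develop (Abs s) = Abs (develop s)"

lemma par_beta_develop: "par_beta s t \<Longrightarrow> par_beta t (develop s)"
  by (induct s arbitrary: t rule: develop.induct) (auto intro!: par_beta_subst)

lemma confluentp_beta: "confluentp beta"
proof -
  have "strong_confluentp par_beta"
    by (rule strong_confluentpI) (blast intro: par_beta_develop)
  moreover have "par_beta\<^sup>*\<^sup>* = beta\<^sup>*\<^sup>*"
    by (rule rtranclp_subset[OF beta_le_par_beta par_beta_le_rtranclp_beta])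
  ultimately show ?thesis
    using strong_confluentp_imp_confluentp confluentp_cong by metis
qed

lemma strong_confluentp_eta: "strong_confluentp eta"
proof
  fix x y z
  assume "eta x y" and "eta x z"
  then show "\<exists>u. eta\<^sup>*\<^sup>* y u \<and> eta\<^sup>=\<^sup>= z u"
  proof (rule compat_commute)
    show "\<exists>u. eta\<^sup>*\<^sup>* y u \<and> eta\<^sup>=\<^sup>= z u" if "eta_rule x y" "eta x z" for x y z
      using eta_from_eta_redex[OF that] by (blast intro: compat.rule)
    show "\<exists>u. eta\<^sup>*\<^sup>* y u \<and> eta\<^sup>=\<^sup>= z u" if "eta_rule x z" "eta x y" for x y z
      using eta_from_eta_redex[OF that] by (blast intro: compat.rule)
  qed
qed

lemma beta_eta_commute:
  assumes "beta\<^sup>*\<^sup>* x y" and "eta\<^sup>*\<^sup>* x z"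
  shows "\<exists>u. eta\<^sup>*\<^sup>* y u \<and> beta\<^sup>*\<^sup>* z u"
  using assms
proof (rule rtranclp_commute)
  fix x y z
  assume "beta x y" and "eta x z"
  then show "\<exists>u. eta\<^sup>*\<^sup>* y u \<and> beta\<^sup>=\<^sup>= z u"
  proof (rule compat_commute)
    show "\<exists>u. eta\<^sup>*\<^sup>* y u \<and> beta\<^sup>=\<^sup>= z u" if "beta_rule x y" "eta x z" for x y z
      using beta_rule_eta[OF that] .
    show "\<exists>u. eta\<^sup>*\<^sup>* y u \<and> beta\<^sup>=\<^sup>= z u" if "eta_rule x z" "beta x y" for x y z
      using beta_from_eta_redex[OF that] by (blast intro: compat.rule)
  qed
qed

lemma red1_eq_sup_beta_eta: "red1 = sup beta eta"
proof (intro HOL.ext iffI)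
  fix s t
  show "sup beta eta s t" if "red1 s t"
    using that
  proof induct
    case (beta s t)
    then show ?case by (simp add: compat.rule beta_rule.intros)
  next
    case (eta s)
    then show ?case by (simp add: compat.rule eta_rule.intros)
  qed (auto intro: compat.intros)
  have "red1 s t" if "compat r s t" "\<And>s t. r s t \<Longrightarrow> red1 s t" for r
    using that by induct (auto intro: red1.intros)
  then show "red1 s t" if "sup beta eta s t"
    using that by (auto elim!: beta_rule.cases eta_rule.cases intro: red1.intros)
qed

theorem beta_eta_conv_imp_common_reduct:
  assumes "beta_eta_conv s t"
  shows "\<exists>w. red1\<^sup>*\<^sup>* s w \<and> red1\<^sup>*\<^sup>* t w"
proof -
  have "confluentp red1"
    unfolding red1_eq_sup_beta_eta
    using confluentp_beta strong_confluentp_imp_confluentp[OF strong_confluentp_eta] beta_eta_commute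
    by (rule confluentp_sup)
  then have "equivclp red1 = red1\<^sup>*\<^sup>* OO red1\<inverse>\<inverse>\<^sup>*\<^sup>*"
    by (simp add: semiconfluentp_equivclp confluentp_eq_semiconfluentp)
  moreover have "beta_eta_conv = equivclp red1"
    by (simp add: beta_eta_conv_def equivclp_def symclp_pointfree)
  ultimately have "(red1\<^sup>*\<^sup>* OO red1\<inverse>\<inverse>\<^sup>*\<^sup>*) s t"
    using assms by simp
  then show ?thesis
    by (auto simp: rtranclp_conversep)
qed

section \<open>Typed terms in the finite full type hierarchy\<close>

definition digit :: "nat \<Rightarrow> nat \<Rightarrow> nat \<Rightarrow> nat" where
  "digit b c x = c div b ^ x mod b"

primrec encode :: "nat \<Rightarrow> nat \<Rightarrow> (nat \<Rightarrow> nat) \<Rightarrow> nat" where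
  "encode b 0 h = 0"
| "encode b (Suc n) h = h 0 + b * encode b n (\<lambda>x. h (Suc x))"

lemma digit_less: "0 < b \<Longrightarrow> digit b c x < b"
  by (simp add: digit_def)

lemma digit_Suc: "digit b c (Suc x) = digit b (c div b) x"
  by (simp add: digit_def div_mult2_eq)

lemma encode_less: "(\<And>x. x < n \<Longrightarrow> h x < b) \<Longrightarrow> encode b n h < b ^ n"
proof (induct n arbitrary: h)
  case (Suc n)
  define e where "e = encode b n (\<lambda>x. h (Suc x))"
  have "h 0 < b" and "e + 1 \<le> b ^ n"
    using Suc by (auto simp: e_def Suc_le_eq)
  then have "h 0 + b * e < b * (e + 1)"
    by simp
  also have "b * (e + 1) \<le> b * b ^ n"
    using \<open>e + 1 \<le> b ^ n\<close> by (rule mult_le_mono2)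
  finally show ?case by (simp add: e_def)
qed simp

lemma digit_encode: "(\<And>x. x < n \<Longrightarrow> h x < b) \<Longrightarrow> x < n \<Longrightarrow> digit b (encode b n h) x = h x"
proof (induct n arbitrary: h x)
  case (Suc n)
  note IH = Suc.hyps and h_less = Suc.prems(1) and x_less = Suc.prems(2)
  from h_less have h0: "h 0 < b" by simp
  show ?case
  proof (cases x)
    case 0
    with h0 show ?thesis by (simp add: digit_def)
  next
    case (Suc y)
    with h0 have "digit b (encode b (Suc n) h) x = digit b (encode b n (\<lambda>x. h (Suc x))) y"
      by (simp add: digit_Suc)
    also have "\<dots> = h (Suc y)"
      by (rule IH) (use h_less x_less Suc in auto)
    finally show ?thesis using Suc by simp
  qed
qed simp

lemma encode_digit: "0 < b \<Longrightarrow> c < b ^ n \<Longrightarrow> encode b n (digit b c) = c"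
proof (induct n arbitrary: c)
  case (Suc n)
  note IH = Suc.hyps and b_pos = Suc.prems(1) and c_less = Suc.prems(2)
  from c_less have "c div b < b ^ n"
    by (simp add: less_mult_imp_div_less mult.commute)
  with IH b_pos have "encode b n (digit b (c div b)) = c div b" .
  moreover have "(\<lambda>x. digit b c (Suc x)) = digit b (c div b)"
    by (simp add: digit_Suc)
  moreover have "digit b c 0 = c mod b"
    by (simp add: digit_def)
  ultimately show ?case
    by simp
qed simp

lemma encode_cong: "(\<And>x. x < n \<Longrightarrow> h x = h' x) \<Longrightarrow> encode b n h = encode b n h'"
proof (induct n arbitrary: h h')
  case (Suc n)
  have "encode b n (\<lambda>x. h (Suc x)) = encode b n (\<lambda>x. h' (Suc x))"
    by (rule Suc.hyps) (simp add: Suc.prems)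
  moreover have "h 0 = h' 0"
    by (simp add: Suc.prems)
  ultimately show ?case
    by simp
qed simp

text \<open>Evaluation needs the domain type of each abstraction, so it works on type-annotated terms.\<close>

datatype aterm = AVar nat | AApp aterm aterm stype | AAbs stype aterm stype

primrec erase :: "aterm \<Rightarrow> dB" where
  "erase (AVar i) = Var i"
| "erase (AApp s t U) = App (erase s) (erase t)"
| "erase (AAbs T s U) = Abs (erase s)"

primrec alift :: "aterm \<Rightarrow> nat \<Rightarrow> aterm" where
  "alift (AVar i) k = (if i < k then AVar i else AVar (Suc i))"
| "alift (AApp s t U) k = AApp (alift s k) (alift t k) U"
| "alift (AAbs T s U) k = AAbs T (alift s (Suc k)) U"

primrec asubst :: "aterm \<Rightarrow> aterm \<Rightarrow> nat \<Rightarrow> aterm" where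
  "asubst (AVar i) s k = (if k < i then AVar (i - 1) else if i = k then s else AVar i)"
| "asubst (AApp t u U) s k = AApp (asubst t s k) (asubst u s k) U"
| "asubst (AAbs T t U) s k = AAbs T (asubst t (alift s 0) (Suc k)) U"

lemma erase_alift [simp]: "erase (alift a k) = lift (erase a) k"
  by (induct a arbitrary: k) simp_all

lemma erase_asubst [simp]: "erase (asubst a b k) = subst (erase a) (erase b) k"
  by (induct a arbitrary: b k) simp_all

lemma erase_eq_Var_iff: "erase a = Var i \<longleftrightarrow> a = AVar i"
  by (cases a) auto

lemma erase_eq_App_iff:
  "erase a = App s t \<longleftrightarrow> (\<exists>a1 a2 U. a = AApp a1 a2 U \<and> erase a1 = s \<and> erase a2 = t)"
  by (cases a) auto

lemma erase_eq_Abs_iff: "erase a = Abs s \<longleftrightarrow> (\<exists>T b U. a = AAbs T b U \<and> erase b = s)"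
  by (cases a) auto

lemma erase_eq_lift: "erase b = lift s k \<Longrightarrow> \<exists>a. b = alift a k \<and> erase a = s"
proof (induct b arbitrary: s k)
  case (AVar i)
  then obtain j where "s = Var j" by (cases s) (auto split: if_splits)
  with AVar show ?case by (intro exI[of _ "AVar j"]) (auto split: if_splits)
next
  case (AApp b1 b2 U)
  then obtain s1 s2 where "s = App s1 s2" "erase b1 = lift s1 k" "erase b2 = lift s2 k"
    by (cases s) (auto split: if_splits)
  with AApp.hyps obtain a1 a2
    where "b1 = alift a1 k" "erase a1 = s1" "b2 = alift a2 k" "erase a2 = s2"
    by metis
  with \<open>s = App s1 s2\<close> show ?case by (intro exI[of _ "AApp a1 a2 U"]) simp
next
  case (AAbs T b U)
  then obtain s1 where "s = Abs s1" "erase b = lift s1 (Suc k)"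
    by (cases s) (auto split: if_splits)
  with AAbs.hyps obtain a1 where "b = alift a1 (Suc k)" "erase a1 = s1"
    by metis
  with \<open>s = Abs s1\<close> show ?case by (intro exI[of _ "AAbs T a1 U"]) simp
qed

inductive atyping :: "stype list \<Rightarrow> aterm \<Rightarrow> stype \<Rightarrow> bool" where
  AVar: "i < length \<Gamma> \<Longrightarrow> \<Gamma> ! i = T \<Longrightarrow> atyping \<Gamma> (AVar i) T"
| AApp: "atyping \<Gamma> s (Fun T U) \<Longrightarrow> atyping \<Gamma> t T \<Longrightarrow> atyping \<Gamma> (AApp s t U) U"
| AAbs: "atyping (T # \<Gamma>) s U \<Longrightarrow> atyping \<Gamma> (AAbs T s U) (Fun T U)"

inductive_cases atyping_AVarE: "atyping \<Gamma> (AVar i) T"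
inductive_cases atyping_AAppE: "atyping \<Gamma> (AApp s t U) V"
inductive_cases atyping_AAbsE: "atyping \<Gamma> (AAbs T s U) V"

lemma typing_imp_atyping: "typing \<Gamma> t T \<Longrightarrow> \<exists>a. erase a = t \<and> atyping \<Gamma> a T"
proof (induct rule: typing.induct)
  case (var i \<Gamma> T)
  then show ?case by (intro exI[of _ "AVar i"]) (simp add: atyping.AVar)
next
  case (app \<Gamma> s T U t)
  then obtain a b where "erase a = s" "atyping \<Gamma> a (Fun T U)" "erase b = t" "atyping \<Gamma> b T" by blast
  then show ?case by (intro exI[of _ "AApp a b U"]) (simp add: atyping.AApp)
next
  case (abs T \<Gamma> t U)
  then obtain a where "erase a = t" "atyping (T # \<Gamma>) a U" by blast
  then show ?case by (intro exI[of _ "AAbs T a U"]) (simp add: atyping.AAbs)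
qed

definition ctxt_ins :: "nat \<Rightarrow> stype \<Rightarrow> stype list \<Rightarrow> stype list" where
  "ctxt_ins k U \<Gamma> = take k \<Gamma> @ U # drop k \<Gamma>"

lemma ctxt_ins_0 [simp]: "ctxt_ins 0 U \<Gamma> = U # \<Gamma>"
  by (simp add: ctxt_ins_def)

lemma ctxt_ins_Suc [simp]: "ctxt_ins (Suc k) U (T # \<Gamma>) = T # ctxt_ins k U \<Gamma>"
  by (simp add: ctxt_ins_def)

lemma length_ctxt_ins [simp]: "k \<le> length \<Gamma> \<Longrightarrow> length (ctxt_ins k U \<Gamma>) = Suc (length \<Gamma>)"
  by (simp add: ctxt_ins_def)

lemma nth_ctxt_ins:
  "k \<le> length \<Gamma> \<Longrightarrow>
   ctxt_ins k U \<Gamma> ! i = (if i < k then \<Gamma> ! i else if i = k then U else \<Gamma> ! (i - 1))"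
  by (auto simp: ctxt_ins_def nth_append min_def split: nat.split)

lemma atyping_alift: "atyping \<Gamma> a T \<Longrightarrow> k \<le> length \<Gamma> \<Longrightarrow> atyping (ctxt_ins k V \<Gamma>) (alift a k) T"
proof (induct arbitrary: k rule: atyping.induct)
  case (AVar i \<Gamma> T)
  then show ?case by (auto intro!: atyping.AVar simp: nth_ctxt_ins)
next
  case (AApp \<Gamma> s T U t)
  then show ?case by (auto intro: atyping.AApp)
next
  case (AAbs T \<Gamma> s U)
  then have "atyping (T # ctxt_ins k V \<Gamma>) (alift s (Suc k)) U"
    using AAbs.hyps(2)[of "Suc k"] by simp
  then show ?case by (auto intro: atyping.AAbs)
qed

lemma atyping_alift_inv:
  "atyping \<Gamma>' b T \<Longrightarrow> b = alift a k \<Longrightarrow> \<Gamma>' = ctxt_ins k V \<Gamma> \<Longrightarrow> k \<le> length \<Gamma> \<Longrightarrow> atyping \<Gamma> a T"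
proof (induct arbitrary: a k \<Gamma> rule: atyping.induct)
  case (AVar i \<Gamma>' T)
  then obtain j where "a = AVar j" by (cases a) (auto split: if_splits)
  with AVar show ?case by (auto intro!: atyping.AVar simp: nth_ctxt_ins split: if_splits)
next
  case (AApp \<Gamma>' s T U t)
  then obtain s0 t0 where a: "a = AApp s0 t0 U" "s = alift s0 k" "t = alift t0 k"
    by (cases a) (auto split: if_splits)
  with AApp.prems have "atyping \<Gamma> s0 (Fun T U)" and "atyping \<Gamma> t0 T"
    by (auto intro: AApp.hyps(2)[of s0 k \<Gamma>] AApp.hyps(4)[of t0 k \<Gamma>])
  with a show ?case by (auto intro: atyping.AApp)
next
  case (AAbs T \<Gamma>' s U)
  then obtain s0 where "a = AAbs T s0 U" "s = alift s0 (Suc k)"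
    by (cases a) (auto split: if_splits)
  with AAbs show ?case by (auto intro!: atyping.AAbs)
qed

lemma atyping_asubst:
  "atyping \<Gamma>' a T \<Longrightarrow> \<Gamma>' = ctxt_ins k V \<Gamma> \<Longrightarrow> atyping \<Gamma> b V \<Longrightarrow> k \<le> length \<Gamma> \<Longrightarrow>
   atyping \<Gamma> (asubst a b k) T"
proof (induct arbitrary: k \<Gamma> b rule: atyping.induct)
  case (AVar i \<Gamma>' T)
  then show ?case by (auto intro!: atyping.AVar simp: nth_ctxt_ins)
next
  case (AApp \<Gamma>' s T U t)
  then have "atyping \<Gamma> (asubst s b k) (Fun T U)" and "atyping \<Gamma> (asubst t b k) T"
    by (auto intro: AApp.hyps(2)[of k \<Gamma> b] AApp.hyps(4)[of k \<Gamma> b])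
  then show ?case by (auto intro: atyping.AApp)
next
  case (AAbs T \<Gamma>' s U)
  have "atyping (T # \<Gamma>) (alift b 0) V"
    using atyping_alift[OF AAbs.prems(2), of 0 T] by simp
  with AAbs show ?case by (auto intro: atyping.AAbs)
qed

primrec card_ty :: "stype \<Rightarrow> nat" where
  "card_ty stype.O = 2"
| "card_ty (Fun T U) = card_ty U ^ card_ty T"

lemma card_ty_ge_2: "2 \<le> card_ty T"
proof (induct T)
  case (Fun T U)
  then have "card_ty U ^ 1 \<le> card_ty U ^ card_ty T"
    by (intro power_increasing) auto
  with Fun show ?case by simp
qed simp

lemma card_ty_pos: "0 < card_ty T"
  using card_ty_ge_2[of T] by simp

text \<open>
  A value of type T is a number below card_ty T. A function of type Fun T U is coded by the number
  whose base card_ty U digits, least significant first, are its values at 0, ..., card_ty T - 1.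
\<close>

primrec sem :: "(nat \<Rightarrow> nat) \<Rightarrow> aterm \<Rightarrow> nat" where
  "sem \<rho> (AVar i) = \<rho> i"
| "sem \<rho> (AApp s t U) = digit (card_ty U) (sem \<rho> s) (sem \<rho> t)"
| "sem \<rho> (AAbs T s U) = encode (card_ty U) (card_ty T) (\<lambda>x. sem (case_nat x \<rho>) s)"

definition env_ins :: "nat \<Rightarrow> nat \<Rightarrow> (nat \<Rightarrow> nat) \<Rightarrow> nat \<Rightarrow> nat" where
  "env_ins k x \<rho> i = (if i < k then \<rho> i else if i = k then x else \<rho> (i - 1))"

lemma env_ins_0: "env_ins 0 x \<rho> = case_nat x \<rho>"
  by (auto simp: env_ins_def fun_eq_iff split: nat.split)

lemma env_ins_Suc: "case_nat y (env_ins k x \<rho>) = env_ins (Suc k) x (case_nat y \<rho>)"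
  by (auto simp: env_ins_def fun_eq_iff split: nat.split)

lemma sem_alift: "sem (env_ins k x \<rho>) (alift a k) = sem \<rho> a"
  by (induct a arbitrary: k \<rho>) (simp_all add: env_ins_def env_ins_Suc)

lemma sem_alift_0: "sem (case_nat x \<rho>) (alift a 0) = sem \<rho> a"
  using sem_alift[of 0 x \<rho> a] by (simp add: env_ins_0)

lemma sem_asubst: "sem \<rho> (asubst a b k) = sem (env_ins k (sem \<rho> b) \<rho>) a"
  by (induct a arbitrary: b k \<rho>) (simp_all add: env_ins_def env_ins_Suc sem_alift_0)

definition env_typed :: "stype list \<Rightarrow> (nat \<Rightarrow> nat) \<Rightarrow> bool" where
  "env_typed \<Gamma> \<rho> \<longleftrightarrow> (\<forall>i < length \<Gamma>. \<rho> i < card_ty (\<Gamma> ! i))"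

lemma env_typed_Cons: "env_typed \<Gamma> \<rho> \<Longrightarrow> x < card_ty T \<Longrightarrow> env_typed (T # \<Gamma>) (case_nat x \<rho>)"
  by (auto simp: env_typed_def nth_Cons' split: nat.split)

lemma sem_less: "atyping \<Gamma> a T \<Longrightarrow> env_typed \<Gamma> \<rho> \<Longrightarrow> sem \<rho> a < card_ty T"
proof (induct arbitrary: \<rho> rule: atyping.induct)
  case (AAbs T \<Gamma> s U)
  then show ?case by (auto intro!: encode_less env_typed_Cons)
qed (auto simp: env_typed_def digit_less card_ty_pos)

lemma sem_beta:
  assumes "atyping \<Gamma> (AApp (AAbs T b U') a U) V"
  shows "atyping \<Gamma> (asubst b a 0) V"
    and "env_typed \<Gamma> \<rho> \<Longrightarrow> sem \<rho> (asubst b a 0) = sem \<rho> (AApp (AAbs T b U') a U)"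
proof -
  from assms(1) have V: "V = U" "U' = U" and tb: "atyping (T # \<Gamma>) b U" and ta: "atyping \<Gamma> a T"
    by (auto elim!: atyping_AAppE atyping_AAbsE)
  show "atyping \<Gamma> (asubst b a 0) V"
    using atyping_asubst[OF tb, of 0 T \<Gamma> a] ta V by simp
  assume "env_typed \<Gamma> \<rho>"
  then have "sem \<rho> a < card_ty T" and "\<And>x. x < card_ty T \<Longrightarrow> sem (case_nat x \<rho>) b < card_ty U"
    using sem_less ta tb env_typed_Cons by blast+
  then show "sem \<rho> (asubst b a 0) = sem \<rho> (AApp (AAbs T b U') a U)"
    by (simp add: V sem_asubst env_ins_0 digit_encode)
qed

lemma sem_eta:
  assumes "atyping \<Gamma> (AAbs T (AApp (alift a 0) (AVar 0) U') U) V"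
  shows "atyping \<Gamma> a V"
    and "env_typed \<Gamma> \<rho> \<Longrightarrow> sem \<rho> a = sem \<rho> (AAbs T (AApp (alift a 0) (AVar 0) U') U)"
proof -
  from assms(1) have V: "V = Fun T U" "U' = U" and ta: "atyping (T # \<Gamma>) (alift a 0) (Fun T U)"
    by (auto elim!: atyping_AAbsE atyping_AAppE atyping_AVarE)
  show ta': "atyping \<Gamma> a V"
    using atyping_alift_inv[OF ta refl, of T \<Gamma>] V by simp
  assume "env_typed \<Gamma> \<rho>"
  have "sem \<rho> (AAbs T (AApp (alift a 0) (AVar 0) U') U) =
      encode (card_ty U) (card_ty T) (digit (card_ty U) (sem \<rho> a))"
    by (simp add: V sem_alift_0)
  also have "\<dots> = sem \<rho> a"
    using sem_less[OF ta' \<open>env_typed \<Gamma> \<rho>\<close>] by (simp add: V encode_digit card_ty_pos)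
  finally show "sem \<rho> a = sem \<rho> (AAbs T (AApp (alift a 0) (AVar 0) U') U)" ..
qed

lemma red1_sem:
  "red1 t t' \<Longrightarrow> erase a = t \<Longrightarrow> atyping \<Gamma> a T \<Longrightarrow>
   \<exists>a'. erase a' = t' \<and> atyping \<Gamma> a' T \<and> (\<forall>\<rho>. env_typed \<Gamma> \<rho> \<longrightarrow> sem \<rho> a' = sem \<rho> a)"
proof (induct arbitrary: a \<Gamma> T rule: red1.induct)
  case (beta s t)
  then obtain T1 b U1 a2 U where "a = AApp (AAbs T1 b U1) a2 U" "erase b = s" "erase a2 = t"
    by (auto simp: erase_eq_App_iff erase_eq_Abs_iff)
  with beta.prems(2) show ?case
    using sem_beta by (intro exI[of _ "asubst b a2 0"]) simp
next
  case (eta s)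
  then obtain T1 c U2 U1 where a: "a = AAbs T1 (AApp c (AVar 0) U2) U1" "erase c = lift s 0"
    by (auto simp: erase_eq_App_iff erase_eq_Abs_iff erase_eq_Var_iff)
  then obtain a0 where "c = alift a0 0" "erase a0 = s"
    using erase_eq_lift by blast
  with a eta.prems(2) show ?case
    using sem_eta by (intro exI[of _ a0]) simp
next
  case (appL s t u)
  then obtain a1 a2 U T2 where a: "a = AApp a1 a2 U" "erase a1 = s" "erase a2 = u"
    and ty: "T = U" "atyping \<Gamma> a1 (Fun T2 U)" "atyping \<Gamma> a2 T2"
    by (auto simp: erase_eq_App_iff elim!: atyping_AAppE)
  with appL.hyps(2) obtain a1' where "erase a1' = t" "atyping \<Gamma> a1' (Fun T2 U)"
    "\<forall>\<rho>. env_typed \<Gamma> \<rho> \<longrightarrow> sem \<rho> a1' = sem \<rho> a1"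
    by blast
  with a ty show ?case
    by (intro exI[of _ "AApp a1' a2 U"]) (auto intro: atyping.AApp)
next
  case (appR s t u)
  then obtain a1 a2 U T2 where a: "a = AApp a1 a2 U" "erase a1 = u" "erase a2 = s"
    and ty: "T = U" "atyping \<Gamma> a1 (Fun T2 U)" "atyping \<Gamma> a2 T2"
    by (auto simp: erase_eq_App_iff elim!: atyping_AAppE)
  with appR.hyps(2) obtain a2' where "erase a2' = t" "atyping \<Gamma> a2' T2"
    "\<forall>\<rho>. env_typed \<Gamma> \<rho> \<longrightarrow> sem \<rho> a2' = sem \<rho> a2"
    by blast
  with a ty show ?case
    by (intro exI[of _ "AApp a1 a2' U"]) (auto intro: atyping.AApp)
next
  case (abs s t)
  then obtain T1 b U where a: "a = AAbs T1 b U" "erase b = s"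
    and ty: "T = Fun T1 U" "atyping (T1 # \<Gamma>) b U"
    by (auto simp: erase_eq_Abs_iff elim!: atyping_AAbsE)
  with abs.hyps(2) obtain b' where "erase b' = t" "atyping (T1 # \<Gamma>) b' U"
    and sem_b': "\<forall>\<rho>. env_typed (T1 # \<Gamma>) \<rho> \<longrightarrow> sem \<rho> b' = sem \<rho> b"
    by blast
  moreover have "sem \<rho> (AAbs T1 b' U) = sem \<rho> a" if "env_typed \<Gamma> \<rho>" for \<rho>
    using a sem_b' env_typed_Cons[OF that] by (auto intro!: encode_cong)
  ultimately show ?case
    using a ty by (intro exI[of _ "AAbs T1 b' U"]) (auto intro: atyping.AAbs)
qed

lemma rtranclp_red1_sem:
  "red1\<^sup>*\<^sup>* t t' \<Longrightarrow> erase a = t \<Longrightarrow> atyping \<Gamma> a T \<Longrightarrow>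
   \<exists>a'. erase a' = t' \<and> atyping \<Gamma> a' T \<and> (\<forall>\<rho>. env_typed \<Gamma> \<rho> \<longrightarrow> sem \<rho> a' = sem \<rho> a)"
proof (induct arbitrary: a rule: rtranclp_induct)
  case (step y z)
  then obtain a1 where "erase a1 = y" "atyping \<Gamma> a1 T"
    and sem_a1: "\<forall>\<rho>. env_typed \<Gamma> \<rho> \<longrightarrow> sem \<rho> a1 = sem \<rho> a"
    by blast
  with red1_sem[OF step.hyps(2)] obtain a2 where "erase a2 = z" "atyping \<Gamma> a2 T"
    "\<forall>\<rho>. env_typed \<Gamma> \<rho> \<longrightarrow> sem \<rho> a2 = sem \<rho> a1"
    by blast
  with sem_a1 show ?case by auto
qed blast

section \<open>Church numerals\<close>

definition church_body :: "stype \<Rightarrow> nat \<Rightarrow> aterm" where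
  "church_body \<tau> n = ((\<lambda>a. AApp (AVar 1) a \<tau>) ^^ n) (AVar 0)"

definition achurch :: "stype \<Rightarrow> nat \<Rightarrow> aterm" where
  "achurch \<tau> n = AAbs (Fun \<tau> \<tau>) (AAbs \<tau> (church_body \<tau> n) \<tau>) (Fun \<tau> \<tau>)"

definition aident :: "stype \<Rightarrow> aterm" where
  "aident \<tau> = AAbs (Fun \<tau> \<tau>) (AVar 0) (Fun \<tau> \<tau>)"

lemma church_body_Suc: "church_body \<tau> (Suc n) = AApp (AVar 1) (church_body \<tau> n) \<tau>"
  by (simp add: church_body_def)

lemma erase_church_body: "erase (church_body \<tau> n) = (App (Var 1) ^^ n) (Var 0)"
  by (induct n) (simp_all add: church_body_def)

lemma erase_achurch: "erase (achurch \<tau> n) = church n"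
  by (simp add: achurch_def church_def erase_church_body)

lemma atyping_church_body: "atyping [\<tau>, Fun \<tau> \<tau>] (church_body \<tau> n) \<tau>"
  by (induct n) (auto simp: church_body_def intro!: atyping.intros)

lemma atyping_achurch: "atyping [] (achurch \<tau> n) (omega \<tau>)"
  by (auto simp: achurch_def omega_def intro!: atyping.AAbs atyping_church_body)

lemma church_body_unique:
  "atyping [\<tau>, Fun \<tau> \<tau>] b \<tau> \<Longrightarrow> erase b = (App (Var 1) ^^ n) (Var 0) \<Longrightarrow> b = church_body \<tau> n"
proof (induct n arbitrary: b)
  case 0
  then show ?case by (simp add: church_body_def erase_eq_Var_iff)
next
  case (Suc n)
  then obtain b2 U where b: "b = AApp (AVar 1) b2 U" "erase b2 = (App (Var 1) ^^ n) (Var 0)"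
    by (auto simp: erase_eq_App_iff erase_eq_Var_iff)
  with Suc.prems(1) have "U = \<tau>" "atyping [\<tau>, Fun \<tau> \<tau>] b2 \<tau>"
    by (auto elim!: atyping_AAppE atyping_AVarE)
  with b Suc.hyps show ?case by (simp add: church_body_Suc)
qed

lemma achurch_unique: "atyping [] a (omega \<tau>) \<Longrightarrow> erase a = church n \<Longrightarrow> a = achurch \<tau> n"
  by (auto simp: church_def achurch_def omega_def erase_eq_Abs_iff
      elim!: atyping_AAbsE intro!: church_body_unique)

lemma aident_unique: "atyping [] a (omega \<tau>) \<Longrightarrow> erase a = Abs (Var 0) \<Longrightarrow> a = aident \<tau>"
  by (auto simp: aident_def omega_def erase_eq_Abs_iff erase_eq_Var_iff elim!: atyping_AAbsE)

inductive_cases red1_VarE: "red1 (Var i) w"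
inductive_cases red1_AppE: "red1 (App s t) w"
inductive_cases red1_AbsE: "red1 (Abs s) w"

lemma not_red1_Var: "\<not> red1 (Var i) w"
  by (auto elim: red1_VarE)

lemma not_red1_church_body: "\<not> red1 ((App (Var 1) ^^ n) (Var 0)) w"
proof (induct n arbitrary: w)
  case 0
  then show ?case by (simp add: not_red1_Var)
next
  case (Suc n)
  then show ?case by (auto elim!: red1_AppE simp: not_red1_Var)
qed

lemma red1_church:
  assumes "red1 (church n) w"
  shows "n = 1 \<and> w = Abs (Var 0)"
proof -
  from assms[unfolded church_def] obtain body where w: "w = Abs body"
    and "red1 (Abs ((App (Var 1) ^^ n) (Var 0))) body"
    by (cases rule: red1_AbsE) auto
  then consider (eta) s where "(App (Var 1) ^^ n) (Var 0) = App (lift s 0) (Var 0)" "body = s"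
    | (inner) b where "red1 ((App (Var 1) ^^ n) (Var 0)) b"
    by (cases rule: red1_AbsE) auto
  then show ?thesis
  proof cases
    case eta
    then obtain m where "n = Suc m" by (cases n) auto
    with eta w show ?thesis by (cases m; cases s) (auto split: if_splits)
  next
    case inner
    then show ?thesis using not_red1_church_body by blast
  qed
qed

lemma not_red1_Abs_Var: "\<not> red1 (Abs (Var 0)) w"
  by (auto elim!: red1_AbsE simp: not_red1_Var)

lemma rtranclp_red1_church:
  "red1\<^sup>*\<^sup>* (church n) w \<Longrightarrow> w = church n \<or> n = 1 \<and> w = Abs (Var 0)"
  by (induct rule: rtranclp_induct) (auto dest: red1_church simp: not_red1_Abs_Var)

definition numeral_value :: "stype \<Rightarrow> nat \<Rightarrow> nat" where
  "numeral_value \<tau> n = sem (\<lambda>_. 0) (achurch \<tau> n)"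

lemma sem_church_body:
  "sem (case_nat x (case_nat g \<rho>)) (church_body \<tau> m) = (digit (card_ty \<tau>) g ^^ m) x"
  by (induct m) (simp_all add: church_body_def)

lemma numeral_value_eq:
  "numeral_value \<tau> m =
   encode (card_ty \<tau> ^ card_ty \<tau>) (card_ty \<tau> ^ card_ty \<tau>)
     (\<lambda>g. encode (card_ty \<tau>) (card_ty \<tau>) (digit (card_ty \<tau>) g ^^ m))"
  by (simp add: numeral_value_def achurch_def sem_church_body)

lemma numeral_value_less: "numeral_value \<tau> m < card_ty (omega \<tau>)"
  unfolding numeral_value_def by (rule sem_less[OF atyping_achurch]) (simp add: env_typed_def)

lemma funpow_digit_less: "x < b \<Longrightarrow> (digit b g ^^ m) x < b"
  by (induct m) (auto simp: digit_less)

lemma digit_digit_numeral_value: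
  assumes "g < card_ty \<tau> ^ card_ty \<tau>" and "x < card_ty \<tau>"
  shows "digit (card_ty \<tau>) (digit (card_ty \<tau> ^ card_ty \<tau>) (numeral_value \<tau> m) g) x =
    (digit (card_ty \<tau>) g ^^ m) x"
proof -
  let ?b = "card_ty \<tau>"
  have "encode ?b ?b (digit ?b h ^^ m) < ?b ^ ?b" for h
    using funpow_digit_less by (intro encode_less) auto
  then have "digit (?b ^ ?b) (numeral_value \<tau> m) g = encode ?b ?b (digit ?b g ^^ m)"
    unfolding numeral_value_eq using assms(1) by (intro digit_encode) auto
  then show ?thesis
    using assms(2) funpow_digit_less by (simp add: digit_encode)
qed

lemma numeral_value_Suc: "\<exists>S. \<forall>m. numeral_value \<tau> (Suc m) = S (numeral_value \<tau> m)"
proof -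
  let ?b = "card_ty \<tau>"
  define S where "S c = encode (?b ^ ?b) (?b ^ ?b)
      (\<lambda>g. encode ?b ?b (\<lambda>x. digit ?b g (digit ?b (digit (?b ^ ?b) c g) x)))" for c
  have "numeral_value \<tau> (Suc m) = S (numeral_value \<tau> m)" for m
    unfolding S_def numeral_value_eq[of \<tau> "Suc m"]
    by (intro encode_cong) (simp add: digit_digit_numeral_value)
  then show ?thesis by blast
qed

lemma numeral_value_0_ne_1: "numeral_value \<tau> 0 \<noteq> numeral_value \<tau> 1"
proof
  let ?b = "card_ty \<tau>"
  define g where "g = encode ?b ?b (\<lambda>_. 1)"
  have b: "2 \<le> ?b" by (rule card_ty_ge_2)
  then have g: "g < ?b ^ ?b" and "digit ?b g 0 = 1" and x: "0 < ?b"
    unfolding g_def by (auto intro: encode_less simp: digit_encode)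
  assume "numeral_value \<tau> 0 = numeral_value \<tau> 1"
  then have "(digit ?b g ^^ 0) 0 = (digit ?b g ^^ 1) 0"
    using digit_digit_numeral_value[OF g x, where m = 0]
      digit_digit_numeral_value[OF g x, where m = 1]
    by simp
  with \<open>digit ?b g 0 = 1\<close> show False
    by simp
qed

lemma sem_aident: "sem (\<lambda>_. 0) (aident \<tau>) = numeral_value \<tau> 1"
  unfolding aident_def numeral_value_eq
  by (auto intro!: encode_cong simp: encode_digit card_ty_pos)

lemma sem_reduct_of_church:
  assumes "atyping [] a (omega \<tau>)" and "red1\<^sup>*\<^sup>* (church m) (erase a)"
  shows "sem (\<lambda>_. 0) a = numeral_value \<tau> m"
  using rtranclp_red1_church[OF assms(2)]
proof
  assume "erase a = church m"
  then show ?thesis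
    using achurch_unique assms(1) by (simp add: numeral_value_def)
next
  assume "m = 1 \<and> erase a = Abs (Var 0)"
  then show ?thesis
    using aident_unique assms(1) sem_aident by metis
qed

lemma numeral_value_eventually_periodic:
  "\<exists>i p. 0 < p \<and> (\<forall>m\<ge>i. numeral_value \<tau> (m + p) = numeral_value \<tau> m)"
proof -
  obtain S where "\<And>m. numeral_value \<tau> (Suc m) = S (numeral_value \<tau> m)"
    using numeral_value_Suc by blast
  moreover have "finite (range (numeral_value \<tau>))"
    using numeral_value_less by (auto intro: finite_subset[of _ "{..<card_ty (omega \<tau>)}"])
  ultimately show ?thesis
    by (rule eventually_periodic_orbit)
qed

section \<open>Strictly definable functions\<close>

primrec sem_apps :: "stype \<Rightarrow> nat \<Rightarrow> nat list \<Rightarrow> nat" where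
  "sem_apps w v [] = v"
| "sem_apps w v (x # xs) = sem_apps w (digit (card_ty (arrows (replicate (length xs) w) w)) v x) xs"

lemma annotate_church_apps:
  assumes "atyping [] aE (arrows (replicate (length ns) (omega \<tau>)) (omega \<tau>))"
  shows "\<exists>a. erase a = foldl App (erase aE) (map church ns) \<and> atyping [] a (omega \<tau>) \<and>
    sem (\<lambda>_. 0) a = sem_apps (omega \<tau>) (sem (\<lambda>_. 0) aE) (map (numeral_value \<tau>) ns)"
  using assms
proof (induct ns arbitrary: aE)
  case (Cons n ns)
  let ?U = "arrows (replicate (length ns) (omega \<tau>)) (omega \<tau>)"
  have "atyping [] (AApp aE (achurch \<tau> n) ?U) ?U"
    using Cons.prems atyping_achurch by (auto simp: arrows_def intro: atyping.AApp)
  from Cons.hyps[OF this] show ?case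
    by (simp add: erase_achurch numeral_value_def)
qed (auto simp: arrows_def)

lemma strictly_definable_factors_through_numeral_value:
  assumes "strictly_definable k f"
  shows "\<exists>\<tau> F. \<forall>ns. length ns = k \<longrightarrow> F (map (numeral_value \<tau>) ns) = numeral_value \<tau> (f ns)"
proof -
  from assms obtain \<tau> E where ty: "typing [] E (arrows (replicate k (omega \<tau>)) (omega \<tau>))"
    and conv: "\<And>ns. length ns = k \<Longrightarrow>
      beta_eta_conv (foldl App E (map church ns)) (church (f ns))"
    unfolding strictly_definable_def by blast
  from typing_imp_atyping[OF ty] obtain aE where aE: "erase aE = E"
    and ty_aE: "atyping [] aE (arrows (replicate k (omega \<tau>)) (omega \<tau>))"
    by blast
  have "sem_apps (omega \<tau>) (sem (\<lambda>_. 0) aE) (map (numeral_value \<tau>) ns) = numeral_value \<tau> (f ns)"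
    if ns: "length ns = k" for ns
  proof -
    obtain a where a: "erase a = foldl App E (map church ns)" "atyping [] a (omega \<tau>)"
      and sem_a: "sem (\<lambda>_. 0) a = sem_apps (omega \<tau>) (sem (\<lambda>_. 0) aE) (map (numeral_value \<tau>) ns)"
      using annotate_church_apps[of aE ns \<tau>] ty_aE ns aE by auto
    obtain u where red: "red1\<^sup>*\<^sup>* (foldl App E (map church ns)) u"
      and church_u: "red1\<^sup>*\<^sup>* (church (f ns)) u"
      using beta_eta_conv_imp_common_reduct[OF conv[OF ns]] by blast
    obtain a' where a': "erase a' = u" "atyping [] a' (omega \<tau>)" "sem (\<lambda>_. 0) a' = sem (\<lambda>_. 0) a"
      using rtranclp_red1_sem[OF red a] by (auto simp: env_typed_def)
    have "sem (\<lambda>_. 0) a' = numeral_value \<tau> (f ns)"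
      using sem_reduct_of_church[OF a'(2)] church_u a'(1) by simp
    with a'(3) sem_a show ?thesis
      by simp
  qed
  then show ?thesis by blast
qed

section \<open>The class G\<close>

lemma classG_nth: "i < n \<Longrightarrow> classG n (\<lambda>xs. xs ! i)"
  by (intro classG.ext ext_poly.proj)

lemma classG_comp3:
  assumes "classG 3 F" and "classG n g0" and "classG n g1" and "classG n g2"
  shows "classG n (\<lambda>xs. F [g0 xs, g1 xs, g2 xs])"
  using classG.comp[OF assms(1), of "[g0, g1, g2]" n] assms(2-4) by simp

lemma classG_if_le:
  assumes "0 < n" and "classG n g" and "classG n h"
  shows "classG n (\<lambda>xs. if xs ! 0 \<le> l then g xs else h xs)"
proof (cases "l = 0")
  case True
  with classG_comp3[OF classG.ext[OF ext_poly.ifzero] classG_nth[OF assms(1)] assms(2,3)]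
  show ?thesis by (simp cong: if_cong)
next
  case False
  then show ?thesis
    using classG_comp3[OF classG.f2[of l] classG_nth[OF assms(1)] assms(2,3)]
    by (simp cong: if_cong)
qed

lemma classG_mod_select:
  assumes "2 \<le> P" and "0 < n" and "\<And>j. j < P \<Longrightarrow> classG n (b j)"
  shows "classG n (\<lambda>xs. b (xs ! 0 mod P) xs)"
proof -
  let ?gs = "(\<lambda>xs. xs ! 0) # map b [0..<P]"
  have "classG n (\<lambda>xs. map (\<lambda>g. g xs) ?gs ! Suc (map (\<lambda>g. g xs) ?gs ! 0 mod P))"
    using assms by (intro classG.comp[OF classG.f1[OF assms(1)]]) (auto intro: classG_nth)
  moreover have "map (\<lambda>g. g xs) ?gs ! Suc (map (\<lambda>g. g xs) ?gs ! 0 mod P) = b (xs ! 0 mod P) xs"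
    for xs
    using assms(1) by simp
  ultimately show ?thesis by simp
qed

lemma classG_from_fibres:
  assumes "0 < n" and "classG n g" and tail: "\<And>xs. i \<le> xs ! 0 \<Longrightarrow> g xs = t xs"
    and fibre: "\<And>k. k < i \<Longrightarrow> \<exists>h. classG n h \<and> (\<forall>xs. xs ! 0 = k \<longrightarrow> h xs = t xs)"
  shows "classG n t"
proof -
  have "\<exists>g. classG n g \<and> (\<forall>xs. k \<le> xs ! 0 \<longrightarrow> g xs = t xs)" if "k \<le> i" for k
    using that
  proof (induct rule: inc_induct)
    case base
    then show ?case using assms(2) tail by blast
  next
    case (step k)
    then obtain g where g: "classG n g" "\<forall>xs. Suc k \<le> xs ! 0 \<longrightarrow> g xs = t xs"
      by blast
    obtain h where h: "classG n h" "\<forall>xs. xs ! 0 = k \<longrightarrow> h xs = t xs"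
      using fibre step.hyps(2) by blast
    have "classG n (\<lambda>xs. if xs ! 0 \<le> k then h xs else g xs)"
      using classG_if_le[OF assms(1) h(1) g(1)] .
    moreover have "\<forall>xs. k \<le> xs ! 0 \<longrightarrow> (if xs ! 0 \<le> k then h xs else g xs) = t xs"
      using g(2) h(2) by (auto simp: not_le Suc_le_eq)
    ultimately show ?case by blast
  qed
  from this[of 0] obtain g' where "classG n g'" and "\<forall>xs. g' xs = t xs"
    by auto
  moreover from this(2) have "g' = t"
    by (simp add: fun_eq_iff)
  ultimately show ?thesis
    by simp
qed

lemma classG_select_eventually_periodic:
  assumes "0 < p" and per: "\<And>m. i \<le> m \<Longrightarrow> (m + p \<in> A) = (m \<in> A)"
  shows "classG 3 (\<lambda>xs. if xs ! 0 \<in> A then xs ! 1 else xs ! 2)"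
proof (rule classG_from_fibres)
  define branch where "branch k xs = (if k \<in> A then xs ! 1 else xs ! 2)" for k and xs :: "nat list"
  have branch: "classG 3 (branch k)" for k
  proof -
    have "branch k = (if k \<in> A then (\<lambda>xs. xs ! 1) else (\<lambda>xs. xs ! 2))"
      by (simp add: branch_def fun_eq_iff)
    then show ?thesis by (simp add: classG_nth)
  qed
  \<comment> \<open>f1 needs a modulus of at least 2, hence the period 2 p.\<close>
  define P where "P = 2 * p"
  have "2 \<le> P" using \<open>0 < p\<close> by (simp add: P_def)
  show "classG 3 (\<lambda>xs. branch (xs ! 0 mod P + P * i) xs)"
    using classG_mod_select[OF \<open>2 \<le> P\<close>, of 3 "\<lambda>j. branch (j + P * i)"] branch by simp
  show "branch (xs ! 0 mod P + P * i) xs = (if xs ! 0 \<in> A then xs ! 1 else xs ! 2)"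
    if "i \<le> xs ! 0" for xs
  proof -
    have "i \<le> P * i"
      using \<open>2 \<le> P\<close> by simp
    then have le: "i \<le> xs ! 0 mod P + P * i"
      by (simp add: trans_le_add2)
    have mod_eq: "(xs ! 0 mod P + P * i) mod p = xs ! 0 mod p"
    proof -
      have "P * i = p * (2 * i)"
        by (simp add: P_def)
      then have "(xs ! 0 mod P + P * i) mod p = xs ! 0 mod P mod p"
        by (simp only: mod_mult_self2)
      also have "\<dots> = xs ! 0 mod p"
        by (rule mod_mod_cancel) (simp add: P_def)
      finally show ?thesis .
    qed
    have "(xs ! 0 mod P + P * i \<in> A) = (xs ! 0 \<in> A)"
      by (rule eventually_periodic_mod_eq[where s = "\<lambda>m. m \<in> A", OF per le that mod_eq])
    then show ?thesis by (simp add: branch_def)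
  qed
  show "\<exists>h. classG 3 h \<and> (\<forall>xs. xs ! 0 = k \<longrightarrow> h xs = (if xs ! 0 \<in> A then xs ! 1 else xs ! 2))"
    if "k < i" for k
    using branch[of k] by (auto simp: branch_def)
qed simp

theorem theorem3:
  fixes A :: "nat set" and f :: "nat \<Rightarrow> nat \<Rightarrow> nat \<Rightarrow> nat"
  assumes "\<And>m n1 n2. f m n1 n2 = (if m \<in> A then n1 else n2)"
  shows "\<not> strictly_definable 3 (\<lambda>xs. f (xs ! 0) (xs ! 1) (xs ! 2))
         \<or> in_G 3 (\<lambda>xs. f (xs ! 0) (xs ! 1) (xs ! 2))"
proof (unfold disj_not1, intro impI)
  let ?f = "\<lambda>xs. f (xs ! 0) (xs ! 1) (xs ! 2)"
  assume "strictly_definable 3 ?f"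
  then obtain \<tau> F
    where F: "\<And>ns. length ns = 3 \<Longrightarrow> F (map (numeral_value \<tau>) ns) = numeral_value \<tau> (?f ns)"
    using strictly_definable_factors_through_numeral_value by blast
  have A: "m \<in> A \<longleftrightarrow> F [numeral_value \<tau> m, numeral_value \<tau> 0, numeral_value \<tau> 1] = numeral_value \<tau> 0"
    for m
    using F[of "[m, 0, 1]"] numeral_value_0_ne_1[of \<tau>] assms by auto
  obtain i p where "0 < p" and "\<forall>m\<ge>i. numeral_value \<tau> (m + p) = numeral_value \<tau> m"
    using numeral_value_eventually_periodic by blast
  then have "classG 3 (\<lambda>xs. if xs ! 0 \<in> A then xs ! 1 else xs ! 2)"
    by (intro classG_select_eventually_periodic[of p i]) (simp_all add: A)
  moreover have "?f = (\<lambda>xs. if xs ! 0 \<in> A then xs ! 1 else xs ! 2)"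
    by (simp add: assms fun_eq_iff)
  ultimately have "classG 3 ?f"
    by (simp only:)
  then show "in_G 3 ?f"
    unfolding in_G_def by blast
qed

end
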